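(* Let $L$ be a finite-dimensional Lie algebra over a field $F$, let $M$ be a maximal subalgebra of $L$, and let $C$ and $D$ be ideal completions of $M$ in $L$. Then $C/k(C)\cong D/k(D)$.
   Context: For a nonzero subalgebra $B$ of $L$, the strict core $k(B)$ is the sum of all ideals of $L$ that are proper subalgebras of $B$ (it is $0$ if there are none). A subalgebra $C$ of $L$ is a completion of $M$ if $C\not\subseteq M$ but every proper subalgebra of $C$ that is an ideal of $L$ is contained in $M$. An ideal completion of $M$ is a completion of $M$ which is an ideal of $L$; for such $C$, $k(C)$ is an ideal of $L$ contained in $C$, so $C/k(C)$ is a Lie algebra. *)

theory Defs
  imports Main "HOL.Vector_Spaces"
begin

definition lie_algebra :: "('a::field \<Rightarrow> 'v::ab_group_add \<Rightarrow> 'v) \<Rightarrow> ('v \<Rightarrow> 'v \<Rightarrow> 'v) \<Rightarrow> bool" where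
  "lie_algebra scale br \<longleftrightarrow>
     vector_space scale \<and>
     (\<forall>x y z. br (x + y) z = br x z + br y z) \<and>
     (\<forall>x y z. br x (y + z) = br x y + br x z) \<and>
     (\<forall>c x y. br (scale c x) y = scale c (br x y)) \<and>
     (\<forall>c x y. br x (scale c y) = scale c (br x y)) \<and>
     (\<forall>x. br x x = 0) \<and>
     (\<forall>x y z. br x (br y z) + br y (br z x) + br z (br x y) = 0)"

definition finite_dim :: "('a::field \<Rightarrow> 'v::ab_group_add \<Rightarrow> 'v) \<Rightarrow> bool" where
  "finite_dim scale \<longleftrightarrow> (\<exists>B. finite B \<and> module.span scale B = UNIV)"

definition lie_subalgebra :: "('a::field \<Rightarrow> 'v::ab_group_add \<Rightarrow> 'v) \<Rightarrow> ('v \<Rightarrow> 'v \<Rightarrow> 'v) \<Rightarrow> 'v set \<Rightarrow> bool" where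
  "lie_subalgebra scale br S \<longleftrightarrow> module.subspace scale S \<and> (\<forall>x\<in>S. \<forall>y\<in>S. br x y \<in> S)"

definition lie_ideal :: "('a::field \<Rightarrow> 'v::ab_group_add \<Rightarrow> 'v) \<Rightarrow> ('v \<Rightarrow> 'v \<Rightarrow> 'v) \<Rightarrow> 'v set \<Rightarrow> bool" where
  "lie_ideal scale br I \<longleftrightarrow> module.subspace scale I \<and> (\<forall>x. \<forall>y\<in>I. br x y \<in> I)"

definition maximal_subalgebra :: "('a::field \<Rightarrow> 'v::ab_group_add \<Rightarrow> 'v) \<Rightarrow> ('v \<Rightarrow> 'v \<Rightarrow> 'v) \<Rightarrow> 'v set \<Rightarrow> bool" where
  "maximal_subalgebra scale br M \<longleftrightarrow> lie_subalgebra scale br M \<and> M \<noteq> UNIV \<and>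
     (\<forall>S. lie_subalgebra scale br S \<and> M \<subseteq> S \<longrightarrow> S = M \<or> S = UNIV)"

text \<open>Strict core: sum (span of the union) of all ideals of L that are proper
  subalgebras of B; it is 0 if there are none.\<close>
definition strict_core :: "('a::field \<Rightarrow> 'v::ab_group_add \<Rightarrow> 'v) \<Rightarrow> ('v \<Rightarrow> 'v \<Rightarrow> 'v) \<Rightarrow> 'v set \<Rightarrow> 'v set" where
  "strict_core scale br B = module.span scale
     (\<Union>{I. lie_ideal scale br I \<and> lie_subalgebra scale br I \<and> I \<subset> B})"

definition completion :: "('a::field \<Rightarrow> 'v::ab_group_add \<Rightarrow> 'v) \<Rightarrow> ('v \<Rightarrow> 'v \<Rightarrow> 'v) \<Rightarrow> 'v set \<Rightarrow> 'v set \<Rightarrow> bool" where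
  "completion scale br M C \<longleftrightarrow> lie_subalgebra scale br C \<and> \<not> C \<subseteq> M \<and>
     (\<forall>I. lie_subalgebra scale br I \<and> I \<subset> C \<and> lie_ideal scale br I \<longrightarrow> I \<subseteq> M)"

definition ideal_completion :: "('a::field \<Rightarrow> 'v::ab_group_add \<Rightarrow> 'v) \<Rightarrow> ('v \<Rightarrow> 'v \<Rightarrow> 'v) \<Rightarrow> 'v set \<Rightarrow> 'v set \<Rightarrow> bool" where
  "ideal_completion scale br M C \<longleftrightarrow> completion scale br M C \<and> lie_ideal scale br C"

definition coset :: "'v::ab_group_add set \<Rightarrow> 'v \<Rightarrow> 'v set" where
  "coset I x = (\<lambda>i. x + i) ` I"

definition quotient_set :: "'v::ab_group_add set \<Rightarrow> 'v set \<Rightarrow> 'v set set" where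
  "quotient_set C I = coset I ` C"

text \<open>Isomorphism of the quotient Lie algebras C/I and D/J: a bijection of cosets
  compatible with the quotient operations (defined via representatives).\<close>
definition quotient_lie_iso :: "('a::field \<Rightarrow> 'v::ab_group_add \<Rightarrow> 'v) \<Rightarrow> ('v \<Rightarrow> 'v \<Rightarrow> 'v) \<Rightarrow>
    'v set \<Rightarrow> 'v set \<Rightarrow> 'v set \<Rightarrow> 'v set \<Rightarrow> bool" where
  "quotient_lie_iso scale br C I D J \<longleftrightarrow>
     (\<exists>g. bij_betw g (quotient_set C I) (quotient_set D J) \<and>
       (\<forall>x\<in>C. \<forall>y\<in>C. \<forall>x'\<in>D. \<forall>y'\<in>D.
          g (coset I x) = coset J x' \<and> g (coset I y) = coset J y' \<longrightarrow>
            g (coset I (x + y)) = coset J (x' + y') \<and>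
            (\<forall>c. g (coset I (scale c x)) = coset J (scale c x')) \<and>
            g (coset I (br x y)) = coset J (br x' y')))"

end

(*
  Write K = k(C) and J = k(D).  Since every ideal properly inside C lies in M, K is the largest
  ideal of L properly contained in C and K \<subseteq> M; so no ideal lies strictly between K + J and
  C + J, and C + M = L by maximality of M.  The ideal P = (C + J) \<inter> (D + K) lies between
  K + J and both C + J and D + K, which leaves two cases.  If C + J = D + K, the relation
  x - x' \<in> K + J between C and D induces C/K \<cong> D/J.  Otherwise P = K + J; then
  (D + K) \<inter> M is an ideal squeezed between J + K and D + K, forcing D \<inter> M = J and likewise
  C \<inter> M = K, and also C \<inter> D \<subseteq> M, so the relation x + x' \<in> M induces the isomorphism.
*)
theory Submission
  imports Defs "HOL-Library.Set_Algebras"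
begin

locale lie_alg = vector_space scale for scale :: "'a::field \<Rightarrow> 'v::ab_group_add \<Rightarrow> 'v" +
  fixes br :: "'v \<Rightarrow> 'v \<Rightarrow> 'v"
  assumes lie_algebra: "lie_algebra scale br"
begin

lemma br_add_left: "br (x + y) z = br x z + br y z"
  and br_add_right: "br x (y + z) = br x y + br x z"
  and br_scale_right: "br x (scale c y) = scale c (br x y)"
  and br_self: "br x x = 0"
  using lie_algebra unfolding lie_algebra_def by blast+

lemma br_diff_left: "br (x - y) z = br x z - br y z"
  using br_add_left[of "x - y" y z] by (simp add: algebra_simps)

lemma br_diff_right: "br x (y - z) = br x y - br x z"
  using br_add_right[of x "y - z" z] by (simp add: algebra_simps)

lemma br_zero_right: "br x 0 = 0"
  using br_diff_right[of x 0 0] by simp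

lemma br_anticomm: "br x y = - br y x"
proof -
  have "br y x + br x y = 0"
    using br_self[of "x + y"] br_self[of x] br_self[of y] by (simp add: br_add_left br_add_right)
  then show ?thesis by (metis add.commute eq_neg_iff_add_eq_0)
qed

lemma coset_eq_iff:
  assumes "subspace K"
  shows "coset K x = coset K y \<longleftrightarrow> x - y \<in> K"
proof
  assume "coset K x = coset K y"
  then have "x \<in> coset K y"
    using assms subspace_0 unfolding coset_def by (metis add.right_neutral image_eqI)
  then show "x - y \<in> K" unfolding coset_def by auto
next
  assume xy: "x - y \<in> K"
  have "x + k \<in> coset K y" "y + k \<in> coset K x" if "k \<in> K" for k
  proof -
    have "x + k = y + ((x - y) + k)" "y + k = x + (k - (x - y))" by simp_all
    then show "x + k \<in> coset K y" "y + k \<in> coset K x"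
      using that xy assms subspace_add subspace_diff unfolding coset_def by (metis image_eqI)+
  qed
  then show "coset K x = coset K y" unfolding coset_def by blast
qed

lemma subspace_set_plus:
  assumes "subspace S" "subspace T"
  shows "subspace (S + T)"
proof -
  have "S + T = {x + y |x y. x \<in> S \<and> y \<in> T}" by (auto simp: set_plus_def)
  then show ?thesis using subspace_sums[OF assms] by simp
qed

lemma subspace_set_plus_subset: "subspace U \<Longrightarrow> S \<subseteq> U \<Longrightarrow> T \<subseteq> U \<Longrightarrow> S + T \<subseteq> U"
  by (auto simp: set_plus_def intro: subspace_add)

lemma subspace_subset_set_plus_left: "subspace T \<Longrightarrow> S \<subseteq> S + T"
  using subspace_0 set_plus_intro[of _ S 0 T] by auto

lemma subspace_subset_set_plus_right: "subspace S \<Longrightarrow> T \<subseteq> S + T"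
  using subspace_0 set_plus_intro[of 0 S _ T] by auto

lemma subspace_set_plus_Int_modular:
  assumes "subspace D" "J \<subseteq> D"
  shows "(K + J) \<inter> D = K \<inter> D + J"
proof
  show "(K + J) \<inter> D \<subseteq> K \<inter> D + J"
  proof
    fix z assume "z \<in> (K + J) \<inter> D"
    then obtain k j where "z = k + j" "k \<in> K" "j \<in> J" "z \<in> D" by (auto elim: set_plus_elim)
    moreover from this have "k \<in> D" using assms subspace_diff[of D z j] by auto
    ultimately show "z \<in> K \<inter> D + J" by auto
  qed
  show "K \<inter> D + J \<subseteq> (K + J) \<inter> D"
    using assms by (auto simp: set_plus_def intro: subspace_add)
qed

lemma subspace_diff_mem_iff:
  assumes S: "subspace S" and "K \<subseteq> S" "J \<subseteq> S" "C \<inter> S \<subseteq> K" "D \<inter> S \<subseteq> J"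
    and "u \<in> C" "v \<in> D" and uv: "u - v \<in> S"
  shows "u \<in> K \<longleftrightarrow> v \<in> J"
proof
  assume "u \<in> K"
  then have "u - (u - v) \<in> S" using \<open>K \<subseteq> S\<close> subspace_diff[OF S _ uv] by blast
  then show "v \<in> J" using assms by auto
next
  assume "v \<in> J"
  then have "(u - v) + v \<in> S" using \<open>J \<subseteq> S\<close> subspace_add[OF S uv] by blast
  then show "u \<in> K" using assms by auto
qed

lemma lie_ideal_subspace: "lie_ideal scale br I \<Longrightarrow> subspace I"
  unfolding lie_ideal_def by blast

lemma lie_ideal_br_right: "lie_ideal scale br I \<Longrightarrow> y \<in> I \<Longrightarrow> br x y \<in> I"
  unfolding lie_ideal_def by blast

lemma lie_ideal_br_left: "lie_ideal scale br I \<Longrightarrow> x \<in> I \<Longrightarrow> br x y \<in> I"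
  using br_anticomm[of x y] lie_ideal_br_right lie_ideal_subspace subspace_neg by metis

lemma lie_ideal_imp_subalgebra: "lie_ideal scale br I \<Longrightarrow> lie_subalgebra scale br I"
  unfolding lie_ideal_def lie_subalgebra_def by blast

lemma lie_subalgebra_subspace: "lie_subalgebra scale br S \<Longrightarrow> subspace S"
  unfolding lie_subalgebra_def by blast

lemma lie_ideal_Int:
  "lie_ideal scale br I \<Longrightarrow> lie_ideal scale br J \<Longrightarrow> lie_ideal scale br (I \<inter> J)"
  unfolding lie_ideal_def using subspace_inter by blast

lemma lie_ideal_set_plus:
  assumes "lie_ideal scale br I" "lie_ideal scale br J"
  shows "lie_ideal scale br (I + J)"
  unfolding lie_ideal_def
proof (intro conjI allI ballI)
  show "subspace (I + J)" using assms lie_ideal_subspace subspace_set_plus by blast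
  fix x y assume "y \<in> I + J"
  then obtain a b where "y = a + b" "a \<in> I" "b \<in> J" by (rule set_plus_elim)
  then show "br x y \<in> I + J" using assms lie_ideal_br_right br_add_right by auto
qed

lemma br_diff_mem_lie_ideal:
  assumes "lie_ideal scale br J" "a - a' \<in> J" "b - b' \<in> J"
  shows "br a b - br a' b' \<in> J"
proof -
  have "br a b - br a' b' = br (a - a') b + br a' (b - b')"
    by (simp add: br_diff_left br_diff_right)
  then show ?thesis
    using assms lie_ideal_br_left lie_ideal_br_right lie_ideal_subspace subspace_add by metis
qed

lemma lie_ideal_strict_core: "lie_ideal scale br (strict_core scale br B)"
proof -
  define U where "U = \<Union>{I. lie_ideal scale br I \<and> lie_subalgebra scale br I \<and> I \<subset> B}"
  have closed: "br x y \<in> span U" if "y \<in> span U" for x y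
  proof (rule span_induct[OF that, where P = "\<lambda>y. br x y \<in> span U"])
    show "subspace {y. br x y \<in> span U}"
      unfolding subspace_def
      using br_zero_right br_add_right br_scale_right span_zero span_add span_scale by auto
  next
    fix z assume "z \<in> U"
    then obtain I where I: "lie_ideal scale br I" "lie_subalgebra scale br I" "I \<subset> B" "z \<in> I"
      unfolding U_def by blast
    with lie_ideal_br_right have "br x z \<in> I" by blast
    then have "br x z \<in> U" unfolding U_def using I by blast
    then show "br x z \<in> span U" using span_base by simp
  qed
  have "strict_core scale br B = span U" unfolding strict_core_def U_def ..
  then show ?thesis unfolding lie_ideal_def by (simp add: closed)
qed

lemma strict_core_subset: "subspace B \<Longrightarrow> strict_core scale br B \<subseteq> B"
  unfolding strict_core_def by (intro span_minimal Union_least) (simp_all add: psubset_eq)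

lemma lie_ideal_subset_strict_core:
  assumes "lie_ideal scale br I" "I \<subset> B"
  shows "I \<subseteq> strict_core scale br B"
proof -
  have "I \<subseteq> \<Union>{I. lie_ideal scale br I \<and> lie_subalgebra scale br I \<and> I \<subset> B}"
    using assms lie_ideal_imp_subalgebra by (intro Union_upper) simp
  then show ?thesis unfolding strict_core_def using span_superset by (rule order_trans)
qed

lemma strict_core_subset_of_completion:
  assumes "completion scale br M C" "subspace M"
  shows "strict_core scale br C \<subseteq> M"
  unfolding strict_core_def
  using assms by (intro span_minimal Union_least) (simp_all add: completion_def)

lemma lie_ideal_plus_maximal_subalgebra:
  assumes M: "maximal_subalgebra scale br M" and C: "lie_ideal scale br C" and "\<not> C \<subseteq> M"
  shows "C + M = UNIV"
proof -
  have M_sub: "lie_subalgebra scale br M" using M unfolding maximal_subalgebra_def by blast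
  have "lie_subalgebra scale br (C + M)" unfolding lie_subalgebra_def
  proof (intro conjI ballI)
    show "subspace (C + M)"
      using C M_sub lie_ideal_subspace lie_subalgebra_subspace subspace_set_plus by blast
    fix x y assume "x \<in> C + M" "y \<in> C + M"
    then obtain c m c' m' where cm: "c \<in> C" "m \<in> M" "c' \<in> C" "m' \<in> M"
      and xy: "x = c + m" "y = c' + m'"
      by (meson set_plus_elim)
    have "br c c' \<in> C" "br c m' \<in> C" "br m c' \<in> C"
      using cm C lie_ideal_br_left lie_ideal_br_right by blast+
    then have "br c c' + br c m' + br m c' \<in> C"
      using C lie_ideal_subspace subspace_add by metis
    moreover have "br m m' \<in> M" using cm M_sub unfolding lie_subalgebra_def by blast
    moreover have "br x y = (br c c' + br c m' + br m c') + br m m'"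
      unfolding xy br_add_left br_add_right by (simp add: ac_simps)
    ultimately show "br x y \<in> C + M" by (simp add: set_plus_intro)
  qed
  moreover have "M \<subseteq> C + M"
    using subspace_subset_set_plus_right[OF lie_ideal_subspace[OF C]] .
  ultimately have "C + M = M \<or> C + M = UNIV"
    using M unfolding maximal_subalgebra_def by simp
  moreover have "C \<subseteq> C + M"
    using subspace_subset_set_plus_left[OF lie_subalgebra_subspace[OF M_sub]] .
  ultimately show ?thesis using \<open>\<not> C \<subseteq> M\<close> by auto
qed

text \<open>C/k(C) is a chief factor of L, also after adding any ideal J.\<close>

lemma lie_ideal_between_strict_core:
  assumes C: "lie_ideal scale br C" and J: "lie_ideal scale br J" and I: "lie_ideal scale br I"
    and lower: "strict_core scale br C + J \<subseteq> I" and upper: "I \<subseteq> C + J"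
  shows "I = strict_core scale br C + J \<or> I = C + J"
proof -
  have "J \<subseteq> I"
    using subspace_subset_set_plus_right[OF lie_ideal_subspace[OF lie_ideal_strict_core]] lower
    by (rule order_trans)
  show ?thesis
  proof (cases "C \<subseteq> I")
    case True
    have "C + J \<subseteq> I"
      by (rule subspace_set_plus_subset[OF lie_ideal_subspace[OF I] True \<open>J \<subseteq> I\<close>])
    then show ?thesis using upper by auto
  next
    case False
    have "C \<inter> I \<subseteq> strict_core scale br C"
      using False by (intro lie_ideal_subset_strict_core[OF lie_ideal_Int[OF C I]]) blast
    have "I = (C + J) \<inter> I" using upper by blast
    also have "\<dots> = C \<inter> I + J"
      by (rule subspace_set_plus_Int_modular[OF lie_ideal_subspace[OF I] \<open>J \<subseteq> I\<close>])
    also have "\<dots> \<subseteq> strict_core scale br C + J"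
      using \<open>C \<inter> I \<subseteq> strict_core scale br C\<close> by (rule set_plus_mono2) simp
    finally show ?thesis using lower by auto
  qed
qed

lemma ex_coset_map_of_relation:
  fixes R :: "'v \<Rightarrow> 'v \<Rightarrow> bool"
  assumes K: "subspace K" and J: "subspace J"
    and R_kernel: "\<And>x x' y y'. \<lbrakk>x \<in> C; y \<in> C; x' \<in> D; y' \<in> D; R x x'; R y y'\<rbrakk>
      \<Longrightarrow> x - y \<in> K \<longleftrightarrow> x' - y' \<in> J"
  obtains g where "\<And>x x' x''. \<lbrakk>x \<in> C; x' \<in> D; R x x'; x' - x'' \<in> J\<rbrakk>
    \<Longrightarrow> g (coset K x) = coset J x''"
proof
  fix x x' x'' assume x: "x \<in> C" "x' \<in> D" "R x x'" and x'': "x' - x'' \<in> J"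
  let ?P = "\<lambda>x'. \<exists>x1\<in>C. coset K x = coset K x1 \<and> x' \<in> D \<and> R x1 x'"
  have "?P (SOME x'. ?P x')" using x by (intro someI[of ?P x']) blast
  then obtain x1 where "x1 \<in> C" "x - x1 \<in> K" "(SOME x'. ?P x') \<in> D" "R x1 (SOME x'. ?P x')"
    using coset_eq_iff[OF K] by blast
  then have "x' - (SOME x'. ?P x') \<in> J" using R_kernel x by blast
  then have "(x' - x'') - (x' - (SOME x'. ?P x')) \<in> J" using subspace_diff[OF J x''] by blast
  then have "(SOME x'. ?P x') - x'' \<in> J" by simp
  then show "coset J (SOME x'. ?P x') = coset J x''" using coset_eq_iff[OF J] by simp
qed

lemma bij_betw_coset_map:
  fixes R :: "'v \<Rightarrow> 'v \<Rightarrow> bool"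
  assumes K: "subspace K" and J: "subspace J"
    and g: "\<And>x x' x''. \<lbrakk>x \<in> C; x' \<in> D; R x x'; x' - x'' \<in> J\<rbrakk> \<Longrightarrow> g (coset K x) = coset J x''"
    and left_total: "\<And>x. x \<in> C \<Longrightarrow> \<exists>x'\<in>D. R x x'"
    and right_total: "\<And>x'. x' \<in> D \<Longrightarrow> \<exists>x\<in>C. R x x'"
    and R_kernel: "\<And>x x' y y'. \<lbrakk>x \<in> C; y \<in> C; x' \<in> D; y' \<in> D; R x x'; R y y'\<rbrakk>
      \<Longrightarrow> x - y \<in> K \<longleftrightarrow> x' - y' \<in> J"
  shows "bij_betw g (quotient_set C K) (quotient_set D J)"
proof -
  have g_self: "g (coset K x) = coset J x'" if "x \<in> C" "x' \<in> D" "R x x'" for x x'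
    using subspace_0[OF J] by (intro g[OF that]) simp
  show ?thesis unfolding bij_betw_def
  proof
    show "inj_on g (quotient_set C K)"
    proof (rule inj_onI)
      fix S T assume "S \<in> quotient_set C K" "T \<in> quotient_set C K" and "g S = g T"
      then obtain x y where xy: "x \<in> C" "y \<in> C" "S = coset K x" "T = coset K y"
        and "g (coset K x) = g (coset K y)"
        unfolding quotient_set_def by blast
      moreover obtain x' y' where "x' \<in> D" "R x x'" "y' \<in> D" "R y y'"
        using left_total xy by meson
      moreover from calculation have "g (coset K x) = coset J x'" "g (coset K y) = coset J y'"
        using g_self by blast+
      ultimately have "x' - y' \<in> J" using coset_eq_iff[OF J] by simp
      then have "x - y \<in> K" using R_kernel xy \<open>x' \<in> D\<close> \<open>y' \<in> D\<close> \<open>R x x'\<close> \<open>R y y'\<close> by blast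
      then show "S = T" using xy coset_eq_iff[OF K] by simp
    qed
    show "g ` quotient_set C K = quotient_set D J"
    proof
      show "g ` quotient_set C K \<subseteq> quotient_set D J"
        using left_total g_self unfolding quotient_set_def by blast
      show "quotient_set D J \<subseteq> g ` quotient_set C K"
      proof
        fix T assume "T \<in> quotient_set D J"
        then obtain x' where "x' \<in> D" "T = coset J x'" unfolding quotient_set_def by blast
        moreover obtain x where "x \<in> C" "R x x'" using right_total \<open>x' \<in> D\<close> by blast
        ultimately show "T \<in> g ` quotient_set C K" using g_self unfolding quotient_set_def by auto
      qed
    qed
  qed
qed

lemma quotient_lie_iso_of_relation:
  fixes R :: "'v \<Rightarrow> 'v \<Rightarrow> bool"
  assumes C: "lie_subalgebra scale br C" and D: "lie_subalgebra scale br D"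
    and K: "subspace K" and J: "lie_ideal scale br J"
    and left_total: "\<And>x. x \<in> C \<Longrightarrow> \<exists>x'\<in>D. R x x'"
    and right_total: "\<And>x'. x' \<in> D \<Longrightarrow> \<exists>x\<in>C. R x x'"
    and R_kernel: "\<And>x x' y y'. \<lbrakk>x \<in> C; y \<in> C; x' \<in> D; y' \<in> D; R x x'; R y y'\<rbrakk>
      \<Longrightarrow> x - y \<in> K \<longleftrightarrow> x' - y' \<in> J"
    and R_add: "\<And>x x' y y'. \<lbrakk>x \<in> C; y \<in> C; x' \<in> D; y' \<in> D; R x x'; R y y'\<rbrakk>
      \<Longrightarrow> R (x + y) (x' + y')"
    and R_scale: "\<And>x x' c. \<lbrakk>x \<in> C; x' \<in> D; R x x'\<rbrakk> \<Longrightarrow> R (scale c x) (scale c x')"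
    and R_br: "\<And>x x' y y'. \<lbrakk>x \<in> C; y \<in> C; x' \<in> D; y' \<in> D; R x x'; R y y'\<rbrakk>
      \<Longrightarrow> R (br x y) (br x' y')"
  shows "quotient_lie_iso scale br C K D J"
proof -
  have Cs: "subspace C" and Ds: "subspace D" using C D lie_subalgebra_subspace by blast+
  have Js: "subspace J" using J lie_ideal_subspace by blast
  obtain g where g: "\<And>x x' x''. \<lbrakk>x \<in> C; x' \<in> D; R x x'; x' - x'' \<in> J\<rbrakk>
      \<Longrightarrow> g (coset K x) = coset J x''"
    using ex_coset_map_of_relation[OF K Js R_kernel] by blast
  show ?thesis unfolding quotient_lie_iso_def
  proof (intro exI conjI ballI allI impI)
    show "bij_betw g (quotient_set C K) (quotient_set D J)"
      by (rule bij_betw_coset_map[where g = g and R = R, OF K Js g left_total right_total R_kernel])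
    fix x y x' y' c
    assume x_y: "x \<in> C" "y \<in> C" and "x' \<in> D" "y' \<in> D"
      and images: "g (coset K x) = coset J x' \<and> g (coset K y) = coset J y'"
    obtain xr yr where xr_yr: "xr \<in> D" "R x xr" "yr \<in> D" "R y yr"
      using left_total x_y by meson
    have "g (coset K x) = coset J xr" "g (coset K y) = coset J yr"
      using g[OF x_y(1) xr_yr(1,2)] g[OF x_y(2) xr_yr(3,4)] subspace_0[OF Js] by simp_all
    then have "coset J xr = coset J x'" "coset J yr = coset J y'" using images by simp_all
    then have dx: "xr - x' \<in> J" and dy: "yr - y' \<in> J" using coset_eq_iff[OF Js] by simp_all
    have "(xr + yr) - (x' + y') \<in> J"
      using subspace_add[OF Js dx dy] by (simp add: algebra_simps)
    then show "g (coset K (x + y)) = coset J (x' + y')"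
      using g subspace_add[OF Cs] subspace_add[OF Ds] R_add x_y xr_yr by metis
    have "scale c xr - scale c x' \<in> J"
      using subspace_scale[OF Js dx] by (simp add: scale_right_diff_distrib)
    then show "g (coset K (scale c x)) = coset J (scale c x')"
      using g subspace_scale[OF Cs] subspace_scale[OF Ds] R_scale x_y xr_yr by metis
    have "br x y \<in> C" "br xr yr \<in> D" using C D x_y xr_yr unfolding lie_subalgebra_def by blast+
    then show "g (coset K (br x y)) = coset J (br x' y')"
      using g R_br x_y xr_yr br_diff_mem_lie_ideal[OF J dx dy] by metis
  qed
qed

lemma ideal_completion_lie_ideal: "ideal_completion scale br M C \<Longrightarrow> lie_ideal scale br C"
  unfolding ideal_completion_def by blast

lemma ideal_completion_subspace: "ideal_completion scale br M C \<Longrightarrow> subspace C"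
  using lie_ideal_subspace ideal_completion_lie_ideal by blast

lemma ideal_completion_not_subset: "ideal_completion scale br M C \<Longrightarrow> \<not> C \<subseteq> M"
  unfolding ideal_completion_def completion_def by blast

lemma strict_core_subset_ideal_completion:
  "ideal_completion scale br M C \<Longrightarrow> strict_core scale br C \<subseteq> C"
  using strict_core_subset ideal_completion_subspace by blast

lemma lie_ideal_subset_ideal_completion_eq:
  assumes "ideal_completion scale br M C" "lie_ideal scale br I" "I \<subseteq> C" "\<not> I \<subseteq> M"
  shows "I = C"
  using assms lie_ideal_imp_subalgebra unfolding ideal_completion_def completion_def by blast

context
  fixes M :: "'v set"
  assumes maximal: "maximal_subalgebra scale br M"
begin

lemma maximal_lie_subalgebra: "lie_subalgebra scale br M"
  using maximal unfolding maximal_subalgebra_def by blast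

lemma maximal_subalgebra_subspace: "subspace M"
  using maximal_lie_subalgebra lie_subalgebra_subspace by blast

lemma strict_core_subset_maximal:
  "ideal_completion scale br M C \<Longrightarrow> strict_core scale br C \<subseteq> M"
  using strict_core_subset_of_completion maximal_subalgebra_subspace
  unfolding ideal_completion_def by blast

lemma ideal_completion_plus_eq_UNIV:
  "ideal_completion scale br M C \<Longrightarrow> C + M = UNIV"
  using lie_ideal_plus_maximal_subalgebra[OF maximal] ideal_completion_lie_ideal
    ideal_completion_not_subset by blast

lemma ex_mem_ideal_completion_add_mem:
  assumes "ideal_completion scale br M C"
  obtains c where "c \<in> C" "x + c \<in> M"
proof -
  have "x \<in> C + M" using ideal_completion_plus_eq_UNIV[OF assms] by simp
  then obtain c m where "c \<in> C" "m \<in> M" "x = c + m" by (rule set_plus_elim)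
  then show thesis using that[of "- c"] subspace_neg[OF ideal_completion_subspace[OF assms]] by simp
qed

lemma ideal_completions_Int_subset:
  assumes C: "ideal_completion scale br M C" and D: "ideal_completion scale br M D" and "C \<noteq> D"
  shows "C \<inter> D \<subseteq> M"
proof (rule ccontr)
  assume "\<not> C \<inter> D \<subseteq> M"
  moreover have "lie_ideal scale br (C \<inter> D)"
    using C D lie_ideal_Int ideal_completion_lie_ideal by blast
  ultimately have "C \<inter> D = C" "C \<inter> D = D"
    using lie_ideal_subset_ideal_completion_eq[OF C] lie_ideal_subset_ideal_completion_eq[OF D]
    by blast+
  then show False using \<open>C \<noteq> D\<close> by blast
qed

lemma strict_core_Int_ideal_completion:
  assumes C: "ideal_completion scale br M C" and D: "ideal_completion scale br M D"
  shows "strict_core scale br C \<inter> D \<subseteq> strict_core scale br D"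
proof (cases "C = D")
  case False
  have "C \<inter> D \<subset> D"
    using ideal_completions_Int_subset[OF C D False] ideal_completion_not_subset[OF D] by blast
  moreover have "lie_ideal scale br (C \<inter> D)"
    using C D lie_ideal_Int ideal_completion_lie_ideal by blast
  ultimately have "C \<inter> D \<subseteq> strict_core scale br D" by (rule lie_ideal_subset_strict_core[rotated])
  then show ?thesis using strict_core_subset_ideal_completion[OF C] by blast
qed simp

lemma strict_cores_plus_Int_subset:
  assumes C: "ideal_completion scale br M C" and D: "ideal_completion scale br M D"
  shows "(strict_core scale br C + strict_core scale br D) \<inter> D \<subseteq> strict_core scale br D"
proof -
  let ?K = "strict_core scale br C" and ?J = "strict_core scale br D"
  have Js: "subspace ?J" using lie_ideal_strict_core lie_ideal_subspace by blast
  have "(?K + ?J) \<inter> D = ?K \<inter> D + ?J"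
    using ideal_completion_subspace[OF D] strict_core_subset_ideal_completion[OF D]
    by (rule subspace_set_plus_Int_modular)
  also have "\<dots> \<subseteq> ?J"
    using subspace_set_plus_subset[OF Js strict_core_Int_ideal_completion[OF C D] order_refl] .
  finally show ?thesis .
qed

lemma Int_maximal_subset_strict_core_of_meet:
  assumes C: "ideal_completion scale br M C" and D: "ideal_completion scale br M D"
    and meet: "(C + strict_core scale br D) \<inter> (D + strict_core scale br C)
      = strict_core scale br C + strict_core scale br D"
  shows "D \<inter> M \<subseteq> strict_core scale br D"
proof -
  let ?K = "strict_core scale br C" and ?J = "strict_core scale br D"
  have Ci: "lie_ideal scale br C" and Di: "lie_ideal scale br D"
    using C D ideal_completion_lie_ideal by blast+
  have Ki: "lie_ideal scale br ?K" and Js: "subspace ?J" and Ks: "subspace ?K"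
    using lie_ideal_strict_core lie_ideal_subspace by blast+
  have DK: "lie_ideal scale br (D + ?K)" by (rule lie_ideal_set_plus[OF Di Ki])
  define N where "N = (D + ?K) \<inter> M"
  have KJ_N: "?K + ?J \<subseteq> N"
  proof -
    have "?K + ?J \<subseteq> D + ?K"
      using strict_core_subset_ideal_completion[OF D] by (subst add.commute) (rule set_plus_mono2, simp_all)
    moreover have "?K + ?J \<subseteq> M"
      by (rule subspace_set_plus_subset[OF maximal_subalgebra_subspace
            strict_core_subset_maximal[OF C] strict_core_subset_maximal[OF D]])
    ultimately show ?thesis unfolding N_def by blast
  qed
  txt \<open>N is an ideal: brackets with C land in the meet, hence in K + J.\<close>
  have N: "lie_ideal scale br N" unfolding lie_ideal_def
  proof (intro conjI allI ballI)
    show Ns: "subspace N" unfolding N_def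
      using lie_ideal_subspace[OF DK] maximal_subalgebra_subspace by (rule subspace_inter)
    fix x n assume n: "n \<in> N"
    obtain c m where cm: "c \<in> C" "m \<in> M" "x = c + m"
      using ideal_completion_plus_eq_UNIV[OF C] by (metis UNIV_I set_plus_elim)
    have "br c n \<in> C + ?J"
      using lie_ideal_br_left[OF Ci cm(1)] subspace_subset_set_plus_left[OF Js] by blast
    moreover have "br c n \<in> D + ?K" "br m n \<in> D + ?K"
      using lie_ideal_br_right[OF DK] n unfolding N_def by blast+
    moreover have "br m n \<in> M" using maximal_lie_subalgebra cm(2) n unfolding lie_subalgebra_def N_def by blast
    ultimately have "br c n \<in> N" "br m n \<in> N" using meet KJ_N unfolding N_def by blast+
    then show "br x n \<in> N" using subspace_add[OF Ns] cm(3) br_add_left by simp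
  qed
  have "N \<noteq> D + ?K"
    using subspace_subset_set_plus_left[OF Ks, of D] ideal_completion_not_subset[OF D]
    unfolding N_def by blast
  moreover have "?J + ?K \<subseteq> N" using KJ_N by (simp add: add.commute)
  ultimately have "N = ?J + ?K"
    using lie_ideal_between_strict_core[OF Di Ki N] unfolding N_def by blast
  then have "D \<inter> M \<subseteq> (?K + ?J) \<inter> D"
    using subspace_subset_set_plus_left[OF Ks, of D] unfolding N_def by (auto simp: add.commute)
  also have "\<dots> \<subseteq> ?J" by (rule strict_cores_plus_Int_subset[OF C D])
  finally show ?thesis .
qed

lemma ideal_completions_Int_subset_of_meet:
  assumes C: "ideal_completion scale br M C" and D: "ideal_completion scale br M D"
    and meet: "(C + strict_core scale br D) \<inter> (D + strict_core scale br C)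
      = strict_core scale br C + strict_core scale br D"
  shows "C \<inter> D \<subseteq> M"
proof (rule ideal_completions_Int_subset[OF C D])
  let ?K = "strict_core scale br C" and ?J = "strict_core scale br D"
  have Ks: "subspace ?K" and Js: "subspace ?J" using lie_ideal_strict_core lie_ideal_subspace by blast+
  show "C \<noteq> D"
  proof
    assume "C = D"
    then have "C \<subseteq> ?K + ?J"
      using meet subspace_subset_set_plus_left[OF Js, of C] subspace_subset_set_plus_left[OF Ks, of D]
      by blast
    also have "\<dots> \<subseteq> M"
      using maximal_subalgebra_subspace strict_core_subset_maximal[OF C] strict_core_subset_maximal[OF D]
      by (rule subspace_set_plus_subset)
    finally show False using ideal_completion_not_subset[OF C] by blast
  qed
qed

lemma quotient_lie_iso_of_complements:
  assumes C: "ideal_completion scale br M C" and D: "ideal_completion scale br M D"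
    and CM: "C \<inter> M \<subseteq> strict_core scale br C" and DM: "D \<inter> M \<subseteq> strict_core scale br D"
    and CD: "C \<inter> D \<subseteq> M"
  shows "quotient_lie_iso scale br C (strict_core scale br C) D (strict_core scale br D)"
proof -
  let ?K = "strict_core scale br C" and ?J = "strict_core scale br D"
  have Ci: "lie_ideal scale br C" and Di: "lie_ideal scale br D"
    using C D ideal_completion_lie_ideal by blast+
  have Ks: "subspace ?K" and Js: "subspace ?J" and Ji: "lie_ideal scale br ?J"
    using lie_ideal_strict_core lie_ideal_subspace by blast+
  have Ms: "subspace M" by (rule maximal_subalgebra_subspace)
  have KM: "?K \<subseteq> M" and JM: "?J \<subseteq> M"
    using strict_core_subset_maximal C D by blast+
  show ?thesis
  proof (rule quotient_lie_iso_of_relation[where R = "\<lambda>x x'. x + x' \<in> M",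
        OF lie_ideal_imp_subalgebra[OF Ci] lie_ideal_imp_subalgebra[OF Di] Ks Ji])
    fix x assume "x \<in> C"
    show "\<exists>x'\<in>D. x + x' \<in> M" using ex_mem_ideal_completion_add_mem[OF D] by blast
  next
    fix x' assume "x' \<in> D"
    obtain c where "c \<in> C" "x' + c \<in> M" by (rule ex_mem_ideal_completion_add_mem[OF C])
    then show "\<exists>x\<in>C. x + x' \<in> M" by (auto simp: add.commute)
  next
    fix x x' y y' assume "x \<in> C" "y \<in> C" "x' \<in> D" "y' \<in> D" "x + x' \<in> M" "y + y' \<in> M"
    have "x - y \<in> C" "- (x' - y') \<in> D"
      using subspace_diff subspace_neg ideal_completion_subspace C D
        \<open>x \<in> C\<close> \<open>y \<in> C\<close> \<open>x' \<in> D\<close> \<open>y' \<in> D\<close> by blast+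
    moreover have "(x - y) - - (x' - y') \<in> M"
    proof -
      have "(x - y) - - (x' - y') = (x + x') - (y + y')" by simp
      then show ?thesis using subspace_diff[OF Ms \<open>x + x' \<in> M\<close> \<open>y + y' \<in> M\<close>] by (simp only:)
    qed
    ultimately have "x - y \<in> ?K \<longleftrightarrow> - (x' - y') \<in> ?J"
      by (rule subspace_diff_mem_iff[OF Ms KM JM CM DM])
    then show "x - y \<in> ?K \<longleftrightarrow> x' - y' \<in> ?J" using subspace_neg[OF Js] by force
  next
    fix x x' y y' assume "x + x' \<in> M" "y + y' \<in> M"
    moreover have "(x + y) + (x' + y') = (x + x') + (y + y')" by (simp add: ac_simps)
    ultimately show "(x + y) + (x' + y') \<in> M" using subspace_add[OF Ms] by metis
  next
    fix x x' c assume "x + x' \<in> M"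
    then show "scale c x + scale c x' \<in> M" using subspace_scale[OF Ms] by (metis scale_right_distrib)
  next
    fix x x' y y' assume "x \<in> C" "y \<in> C" "x' \<in> D" "y' \<in> D" "x + x' \<in> M" "y + y' \<in> M"
    have "br x y' \<in> C \<inter> D" "br x' y \<in> C \<inter> D"
      using lie_ideal_br_left[OF Ci \<open>x \<in> C\<close>] lie_ideal_br_right[OF Di \<open>y' \<in> D\<close>]
        lie_ideal_br_right[OF Ci \<open>y \<in> C\<close>] lie_ideal_br_left[OF Di \<open>x' \<in> D\<close>] by blast+
    then have "br x y' \<in> M" "br x' y \<in> M" using CD by blast+
    moreover have "br (x + x') (y + y') \<in> M" using maximal_lie_subalgebra \<open>x + x' \<in> M\<close> \<open>y + y' \<in> M\<close>
      unfolding lie_subalgebra_def by blast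
    moreover have "br x y + br x' y' = (br (x + x') (y + y') - br x y') - br x' y"
      by (simp add: br_add_left br_add_right algebra_simps)
    ultimately show "br x y + br x' y' \<in> M" using subspace_diff[OF Ms] by metis
  qed
qed

lemma quotient_lie_iso_of_equal_sums:
  assumes C: "ideal_completion scale br M C" and D: "ideal_completion scale br M D"
    and sums: "C + strict_core scale br D = D + strict_core scale br C"
  shows "quotient_lie_iso scale br C (strict_core scale br C) D (strict_core scale br D)"
proof -
  let ?K = "strict_core scale br C" and ?J = "strict_core scale br D"
  define E where "E = ?K + ?J"
  have Ci: "lie_ideal scale br C" and Di: "lie_ideal scale br D"
    using C D ideal_completion_lie_ideal by blast+
  have Ki: "lie_ideal scale br ?K" and Ji: "lie_ideal scale br ?J"
    and Ks: "subspace ?K" and Js: "subspace ?J"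
    using lie_ideal_strict_core lie_ideal_subspace by blast+
  have Ei: "lie_ideal scale br E" unfolding E_def by (rule lie_ideal_set_plus[OF Ki Ji])
  have Es: "subspace E" by (rule lie_ideal_subspace[OF Ei])
  have KE: "?K \<subseteq> E" and JE: "?J \<subseteq> E" unfolding E_def
    using subspace_subset_set_plus_left[OF Js] subspace_subset_set_plus_right[OF Ks] by blast+
  have CE: "C \<inter> E \<subseteq> ?K"
    using strict_cores_plus_Int_subset[OF D C] unfolding E_def by (simp add: add.commute Int_commute)
  have DE: "D \<inter> E \<subseteq> ?J"
    using strict_cores_plus_Int_subset[OF C D] unfolding E_def by (simp add: Int_commute)
  have Cs: "subspace C" and Ds: "subspace D"
    using ideal_completion_subspace C D by blast+
  show ?thesis
  proof (rule quotient_lie_iso_of_relation[where R = "\<lambda>x x'. x - x' \<in> E",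
        OF lie_ideal_imp_subalgebra[OF Ci] lie_ideal_imp_subalgebra[OF Di] Ks Ji])
    fix x assume "x \<in> C"
    then have "x \<in> D + ?K" using sums subspace_subset_set_plus_left[OF Js] by blast
    then obtain d k where "d \<in> D" "k \<in> ?K" "x = d + k" by (rule set_plus_elim)
    then show "\<exists>x'\<in>D. x - x' \<in> E" using KE by force
  next
    fix x' assume "x' \<in> D"
    then have "x' \<in> C + ?J" using sums subspace_subset_set_plus_left[OF Ks] by blast
    then obtain c j where "c \<in> C" "j \<in> ?J" "x' = c + j" by (rule set_plus_elim)
    moreover have "- j \<in> E" using JE subspace_neg[OF Es] \<open>j \<in> ?J\<close> by blast
    ultimately show "\<exists>x\<in>C. x - x' \<in> E" by force
  next
    fix x x' y y' assume "x \<in> C" "y \<in> C" "x' \<in> D" "y' \<in> D" "x - x' \<in> E" "y - y' \<in> E"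
    then have "x - y \<in> C" "x' - y' \<in> D" using subspace_diff Cs Ds by blast+
    moreover have "(x - y) - (x' - y') \<in> E"
    proof -
      have "(x - y) - (x' - y') = (x - x') - (y - y')" by (simp add: algebra_simps)
      then show ?thesis using subspace_diff[OF Es \<open>x - x' \<in> E\<close> \<open>y - y' \<in> E\<close>] by (simp only:)
    qed
    ultimately show "x - y \<in> ?K \<longleftrightarrow> x' - y' \<in> ?J"
      by (rule subspace_diff_mem_iff[OF Es KE JE CE DE])
  next
    fix x x' y y' assume "x - x' \<in> E" "y - y' \<in> E"
    moreover have "(x + y) - (x' + y') = (x - x') + (y - y')" by (simp add: algebra_simps)
    ultimately show "(x + y) - (x' + y') \<in> E" using subspace_add[OF Es] by metis
  next
    fix x x' c assume "x - x' \<in> E"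
    then show "scale c x - scale c x' \<in> E"
      using subspace_scale[OF Es] by (metis scale_right_diff_distrib)
  next
    fix x x' y y' assume "x - x' \<in> E" "y - y' \<in> E"
    then show "br x y - br x' y' \<in> E" by (rule br_diff_mem_lie_ideal[OF Ei])
  qed
qed

lemma quotient_lie_iso_strict_cores:
  assumes C: "ideal_completion scale br M C" and D: "ideal_completion scale br M D"
  shows "quotient_lie_iso scale br C (strict_core scale br C) D (strict_core scale br D)"
proof -
  let ?K = "strict_core scale br C" and ?J = "strict_core scale br D"
  define P where "P = (C + ?J) \<inter> (D + ?K)"
  have Ci: "lie_ideal scale br C" and Di: "lie_ideal scale br D"
    using C D ideal_completion_lie_ideal by blast+
  have Ki: "lie_ideal scale br ?K" and Ji: "lie_ideal scale br ?J"
    using lie_ideal_strict_core by blast+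
  have P: "lie_ideal scale br P"
    unfolding P_def by (intro lie_ideal_Int lie_ideal_set_plus Ci Di Ki Ji)
  have "?K + ?J \<subseteq> C + ?J"
    by (rule set_plus_mono2[OF strict_core_subset_ideal_completion[OF C] order_refl])
  moreover have "?J + ?K \<subseteq> D + ?K"
    by (rule set_plus_mono2[OF strict_core_subset_ideal_completion[OF D] order_refl])
  ultimately have "?K + ?J \<subseteq> P" unfolding P_def by (simp add: add.commute)
  then have "P = ?K + ?J \<or> P = C + ?J" "P = ?J + ?K \<or> P = D + ?K"
    using lie_ideal_between_strict_core[OF Ci Ji P] lie_ideal_between_strict_core[OF Di Ki P]
    unfolding P_def by (auto simp: add.commute[of ?K ?J])
  then consider "P = ?K + ?J" | "C + ?J = D + ?K"
    unfolding P_def by (metis add.commute)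
  then show ?thesis
  proof cases
    case 1
    then have meet: "(C + ?J) \<inter> (D + ?K) = ?K + ?J" unfolding P_def .
    then have "(D + ?K) \<inter> (C + ?J) = ?J + ?K" by (simp add: Int_commute add.commute)
    then have "C \<inter> M \<subseteq> ?K" by (rule Int_maximal_subset_strict_core_of_meet[OF D C])
    moreover have "D \<inter> M \<subseteq> ?J" by (rule Int_maximal_subset_strict_core_of_meet[OF C D meet])
    moreover have "C \<inter> D \<subseteq> M" by (rule ideal_completions_Int_subset_of_meet[OF C D meet])
    ultimately show ?thesis by (rule quotient_lie_iso_of_complements[OF C D])
  next
    case 2
    then show ?thesis by (rule quotient_lie_iso_of_equal_sums[OF C D])
  qed
qed

end

end

theorem theorem2p1:
  fixes scale :: "'a::field \<Rightarrow> 'v::ab_group_add \<Rightarrow> 'v"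
    and br :: "'v \<Rightarrow> 'v \<Rightarrow> 'v"
    and M C D :: "'v set"
  assumes "lie_algebra scale br"
    and "finite_dim scale"
    and "maximal_subalgebra scale br M"
    and "ideal_completion scale br M C"
    and "ideal_completion scale br M D"
  shows "quotient_lie_iso scale br C (strict_core scale br C) D (strict_core scale br D)"
proof -
  have "lie_alg scale br"
    using assms(1) unfolding lie_alg_def lie_alg_axioms_def lie_algebra_def by blast
  then show ?thesis by (rule lie_alg.quotient_lie_iso_strict_cores[OF _ assms(3-5)])
qed

end
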